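(* Let $m\ge1$, $q=2^m$, $n=3$, and let $L(x)=ax+bx^q+cx^{q^2}$ with $a,b,c\in\mathbb F_{q^3}$ and $L(1)=0$. Then \[|\ker\mathrm{Tr}\cap\ker L^\prime|=\begin{cases}1&\text{if }\mathrm{Tr}(a^{q+1}+a^qb+b^{q+1})\ne0,\\ q^2&\text{if }a+b^{q^2}=a+c^q=0,\\ q&\text{otherwise}.\end{cases}\]
   Context: $\mathrm{Tr}(x)=x+x^q+x^{q^2}$ is the trace map of $\mathbb F_{q^3}$ over $\mathbb F_q$. For a $2$-linear polynomial $L(x)=\sum_j a_jx^{2^j}$ over $\mathbb F_{q^3}$, its adjoint is $L^\prime(x)=\sum_j(a_jx)^{2^{-j}}$, where $y\mapsto y^{2^{-j}}$ is the inverse of $y\mapsto y^{2^j}$ on $\mathbb F_{q^3}$; here $L'(x)=ax+(bx)^{q^2}+(cx)^{q}$. $\ker$ denotes the kernel of an additive map on $\mathbb F_{q^3}$. *)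

theory Defs
  imports Main
begin

text \<open>The field F_{q^3} is modelled as a finite field type 'a with CARD('a) = q^3.
  Trace map of F_{q^3} over F_q.\<close>
definition Tr :: "nat \<Rightarrow> 'a::field \<Rightarrow> 'a" where
  "Tr q x = x + x ^ q + x ^ (q ^ 2)"

definition Ladj :: "nat \<Rightarrow> 'a::field \<Rightarrow> 'a \<Rightarrow> 'a \<Rightarrow> 'a \<Rightarrow> 'a" where
  "Ladj q a b c x = a * x + (b * x) ^ (q ^ 2) + (c * x) ^ q"

definition L :: "nat \<Rightarrow> 'a::field \<Rightarrow> 'a \<Rightarrow> 'a \<Rightarrow> 'a \<Rightarrow> 'a" where
  "L q a b c x = a * x + b * x ^ q + c * x ^ (q ^ 2)"

end

(*
  Write \<sigma> x = x^q. In characteristic 2 the kernel of the trace is {x. \<sigma>(\<sigma> x) = x + \<sigma> x}, and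
  there L' becomes x \<mapsto> A x + B \<sigma>x with A = a + b^(q^2), B = b^(q^2) + c^q. Applying \<sigma> to
  A x + B \<sigma>x = 0 and eliminating \<sigma>x gives P x = 0 for P = A \<sigma>A + A \<sigma>B + B \<sigma>B, and L(1) = 0,
  i.e. c = a + b, makes P = Tr(a^(q+1) + a^q b + b^(q+1)). So P \<noteq> 0 leaves only x = 0, and
  A = B = 0 leaves the whole kernel of the trace, of size q^2. Otherwise B \<noteq> 0 and r = A/B
  satisfies r \<sigma>r = r + 1, hence has norm r \<sigma>r \<sigma>\<sigma>r = 1; by Hilbert 90 the solutions, which are
  the x with \<sigma>x = r x, form a line over the fixed field F_q.
*)
theory Submission
  imports Defs "HOL-Number_Theory.Residues" "HOL-Computational_Algebra.Polynomial"
begin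

lemma power_card_UNIV_eq_self:
  fixes x :: "'a::{field,finite}"
  shows "x ^ card (UNIV :: 'a set) = x"
proof (cases "x = 0")
  case False
  let ?U = "UNIV - {0 :: 'a}"
  have "x ^ card ?U * \<Prod>?U = (\<Prod>y\<in>?U. x * y)"
    by (simp add: prod.distrib)
  also have "\<dots> = \<Prod>?U"
    by (rule prod.reindex_bij_witness[of _ "\<lambda>y. y / x" "\<lambda>y. x * y"]) (use False in auto)
  finally have "x ^ (card (UNIV :: 'a set) - 1) = 1"
    by (simp add: card_Diff_singleton)
  then have "x ^ Suc (card (UNIV :: 'a set) - 1) = x"
    by simp
  then show ?thesis
    using finite_UNIV_card_ge_0[where 'a = 'a] by simp
qed (use finite_UNIV_card_ge_0[where 'a = 'a] in simp)

lemma CHAR_eq_2_if_card_UNIV_eq_power_2: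
  assumes "card (UNIV :: 'a::{idom,finite} set) = 2 ^ k" and "k \<ge> 1"
  shows "CHAR('a) = 2"
proof -
  have "prime CHAR('a)"
    by (intro prime_CHAR_semidom finite_imp_CHAR_pos) simp
  moreover have "CHAR('a) dvd 2 ^ k"
    using CHAR_dvd_CARD[where 'a = 'a] assms(1) by simp
  ultimately have "CHAR('a) dvd 2"
    using prime_dvd_power by blast
  with \<open>prime CHAR('a)\<close> show ?thesis
    using primes_dvd_imp_eq two_is_prime_nat by blast
qed

lemma card_UNIV_eq_card_kernel_mult_card_range:
  fixes f :: "'a::{ab_group_add,finite} \<Rightarrow> 'b::ab_group_add"
  assumes additive: "\<And>x y. f (x + y) = f x + f y"
  shows "card (UNIV :: 'a set) = card {x. f x = 0} * card (range f)"
proof -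
  have f_diff: "f (x - y) = f x - f y" for x y
    using additive[of "x - y" y] by (simp add: algebra_simps)
  have fibre: "f -` {f y} = (+) y ` {x. f x = 0}" for y
  proof (intro equalityI subsetI)
    fix x assume "x \<in> f -` {f y}"
    then have "x = y + (x - y)" and "f (x - y) = 0"
      by (simp_all add: f_diff)
    then show "x \<in> (+) y ` {x. f x = 0}"
      by blast
  qed (use additive in auto)
  have "card (UNIV :: 'a set) = card (\<Union>z\<in>range f. f -` {z})"
    by (rule arg_cong[where f = card]) auto
  also have "\<dots> = (\<Sum>z\<in>range f. card (f -` {z}))"
    by (rule card_UN_disjoint) auto
  also have "\<dots> = (\<Sum>z\<in>range f. card {x. f x = 0})"
    by (intro sum.cong) (auto simp: fibre card_image)
  finally show ?thesis
    by simp
qed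

lemma card_trinomial_roots_le:
  fixes u v w :: "'a::field"
  assumes "w \<noteq> 0" and "e < n" and "1 < n"
  shows "card {x. u * x + v * x ^ e + w * x ^ n = 0} \<le> n"
proof -
  let ?p = "monom u 1 + monom v e + monom w n"
  have "coeff ?p n = w"
    using assms by auto
  then have "?p \<noteq> 0"
    using assms(1) by (metis coeff_0)
  moreover have "degree ?p \<le> n"
    using assms(2,3)
    by (intro degree_add_le degree_monom_le[THEN order.trans]) auto
  moreover have "{x. u * x + v * x ^ e + w * x ^ n = 0} = {x. poly ?p x = 0}"
    by (simp add: poly_monom)
  ultimately show ?thesis
    using card_poly_roots_bound[of ?p] by simp
qed

text \<open>With \<open>a\<^sub>i = a^(q^i)\<close>, \<open>b\<^sub>i = b^(q^i)\<close> and \<open>c = a + b\<close>, the left-hand side is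
  \<open>A A^q + A B^q + B B^q\<close> for \<open>A = a + b^(q^2)\<close> and \<open>B = b^(q^2) + c^q\<close>; the three groups on
  the right are the conjugates of \<open>a^(q+1) + a^q b + b^(q+1)\<close>.\<close>
lemma trace_quadratic_form_identity:
  fixes a0 a1 a2 b0 b1 b2 :: "'a::comm_ring_1"
  shows "(a0 + b2) * (a1 + b0) + (a0 + b2) * (b0 + a2 + b2) + (b2 + a1 + b1) * (b0 + a2 + b2)
    = (a0 * a1 + a1 * b0 + b0 * b1) + (a1 * a2 + a2 * b1 + b1 * b2) + (a2 * a0 + a0 * b2 + b2 * b0)
      + 2 * (a0 * b0 + a1 * b2 + b0 * b2 + a2 * b2 + b2 * b2)"
  by (simp add: algebra_simps)

context
  fixes m q :: nat
  assumes m_pos: "m \<ge> 1" and q_eq: "q = 2 ^ m"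
    and card_field: "card (UNIV :: 'a::{field,finite} set) = q ^ 3"
begin

lemma q_ge_2: "q \<ge> 2"
  using m_pos q_eq self_le_power[of "2::nat" m] by simp

lemma CHAR_field_eq_2: "CHAR('a) = 2"
  using card_field m_pos q_eq
  by (intro CHAR_eq_2_if_card_UNIV_eq_power_2[where k = "3 * m"])
    (simp_all add: power_mult[of 2 m 3] mult.commute)

lemma two_eq_0: "(2 :: 'a) = 0"
  using of_nat_CHAR[where 'a = 'a] by (simp add: CHAR_field_eq_2)

lemma add_self_eq_0: "(x :: 'a) + x = 0"
  by (metis mult_2 mult_zero_left two_eq_0)

lemma uminus_eq_self: "- (x :: 'a) = x"
  by (metis add_eq_0_iff add_self_eq_0)

lemma add_eq_0_iff_eq: "(x :: 'a) + y = 0 \<longleftrightarrow> x = y"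
  by (metis add_eq_0_iff uminus_eq_self)

definition frob :: "'a \<Rightarrow> 'a" where
  "frob x = x ^ q"

lemma frob_add: "frob (x + y) = frob x + frob y"
  unfolding frob_def using CHAR_field_eq_2 q_eq by (intro freshmans_dream') simp_all

lemma frob_mult: "frob (x * y) = frob x * frob y"
  by (simp add: frob_def power_mult_distrib)

lemma frob_divide: "frob (x / y) = frob x / frob y"
  by (simp add: frob_def power_divide)

lemma frob_eq_0_iff [simp]: "frob x = 0 \<longleftrightarrow> x = 0"
  using q_ge_2 by (simp add: frob_def)

lemma frob_0 [simp]: "frob 0 = 0" and frob_1 [simp]: "frob 1 = 1"
  using q_ge_2 by (simp_all add: frob_def)

lemma frob_frob_frob [simp]: "frob (frob (frob x)) = x"
  using power_card_UNIV_eq_self[of x] card_field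
  by (simp add: frob_def power_mult[symmetric] power3_eq_cube)

lemma power_q_sq_eq: "x ^ (q ^ 2) = frob (frob x)"
  by (simp add: frob_def power_mult[symmetric] power2_eq_square)

lemma Tr_eq: "Tr q x = x + frob x + frob (frob x)"
  by (simp add: Tr_def frob_def power_q_sq_eq)

lemma Tr_eq_0_iff: "Tr q x = 0 \<longleftrightarrow> frob (frob x) = x + frob x"
  unfolding Tr_eq by (metis add_eq_0_iff_eq)

lemma card_frob_fixed_le: "card {x :: 'a. frob x = x} \<le> q"
proof -
  have "{x :: 'a. frob x = x} = {x. 1 * x + 0 * x ^ 0 + 1 * x ^ q = 0}"
    by (auto simp: frob_def add_eq_0_iff_eq)
  then show ?thesis
    using card_trinomial_roots_le[of 1 0 q 1 0] q_ge_2 by simp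
qed

lemma card_ker_Tr_le: "card {x :: 'a. Tr q x = 0} \<le> q ^ 2"
proof -
  have "q < q ^ 2"
    using q_ge_2 by (simp add: power2_eq_square)
  then show ?thesis
    using card_trinomial_roots_le[of 1 q "q ^ 2" 1 1] q_ge_2 by (simp add: Tr_def)
qed

lemma card_frob_fixed_mult_card_ker_Tr_ge:
  "q ^ 3 \<le> card {x :: 'a. frob x = x} * card {x :: 'a. Tr q x = 0}"
proof -
  let ?f = "\<lambda>x :: 'a. x + frob x"
  have "{x. ?f x = 0} = {x. frob x = x}"
    by (auto simp: add_eq_0_iff_eq)
  then have "q ^ 3 = card {x :: 'a. frob x = x} * card (range ?f)"
    using card_UNIV_eq_card_kernel_mult_card_range[of ?f] card_field
    by (simp add: frob_add algebra_simps)
  also have "\<dots> \<le> card {x :: 'a. frob x = x} * card {x :: 'a. Tr q x = 0}"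
    by (intro mult_le_mono2 card_mono) (auto simp: Tr_eq frob_add add_self_eq_0 algebra_simps)
  finally show ?thesis .
qed

lemma card_frob_fixed: "card {x :: 'a. frob x = x} = q"
  and card_ker_Tr: "card {x :: 'a. Tr q x = 0} = q ^ 2"
proof -
  have cube: "q ^ 3 = q * q ^ 2"
    by (simp add: power2_eq_square power3_eq_cube)
  have "q * q ^ 2 \<le> card {x :: 'a. frob x = x} * q ^ 2"
    using card_frob_fixed_mult_card_ker_Tr_ge card_ker_Tr_le unfolding cube
    by (meson le_trans mult_le_mono2)
  then have "q \<le> card {x :: 'a. frob x = x}"
    using q_ge_2 by simp
  moreover have "q * q ^ 2 \<le> q * card {x :: 'a. Tr q x = 0}"
    using card_frob_fixed_mult_card_ker_Tr_ge card_frob_fixed_le unfolding cube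
    by (meson le_trans mult_le_mono1)
  then have "q ^ 2 \<le> card {x :: 'a. Tr q x = 0}"
    using q_ge_2 by simp
  ultimately show "card {x :: 'a. frob x = x} = q" and "card {x :: 'a. Tr q x = 0} = q ^ 2"
    using card_frob_fixed_le card_ker_Tr_le by simp_all
qed

lemma Ladj_eq_on_ker_Tr:
  assumes "Tr q x = 0"
  shows "Ladj q a b c x = (a + frob (frob b)) * x + (frob (frob b) + frob c) * frob x"
  using assms
  by (simp add: Ladj_def power_q_sq_eq frob_def[symmetric] frob_mult Tr_eq_0_iff algebra_simps)

lemma Tr_quadratic_form_eq:
  assumes "c = a + b" and "A = a + frob (frob b)" and "B = frob (frob b) + frob c"
  shows "Tr q (a ^ (q + 1) + a ^ q * b + b ^ (q + 1)) = A * frob A + A * frob B + B * frob B"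
proof -
  have "Tr q (a ^ (q + 1) + a ^ q * b + b ^ (q + 1))
      = (a * frob a + frob a * b + b * frob b)
      + (frob a * frob (frob a) + frob (frob a) * frob b + frob b * frob (frob b))
      + (frob (frob a) * a + a * frob (frob b) + frob (frob b) * b)"
    by (simp add: Tr_eq frob_add frob_mult power_add frob_def[symmetric] algebra_simps)
  also have "\<dots> = A * frob A + A * frob B + B * frob B"
    using trace_quadratic_form_identity[of a "frob a" b "frob (frob a)" "frob b" "frob (frob b)"]
    by (simp add: assms frob_add two_eq_0 algebra_simps)
  finally show ?thesis .
qed

lemma ker_Tr_linear_eq_singleton:
  assumes "A * frob A + A * frob B + B * frob B \<noteq> 0"
  shows "{x. Tr q x = 0 \<and> A * x + B * frob x = 0} = {0}"
proof (intro equalityI subsetI)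
  fix x assume "x \<in> {x. Tr q x = 0 \<and> A * x + B * frob x = 0}"
  then have Tr_x: "frob (frob x) = x + frob x" and lin: "A * x + B * frob x = 0"
    by (simp_all add: Tr_eq_0_iff)
  have lin_frob: "frob A * frob x + frob B * (x + frob x) = 0"
    using arg_cong[OF lin, of frob] Tr_x by (simp add: frob_add frob_mult)
  have "(A * frob A + A * frob B + B * frob B) * x
      = (frob A + frob B) * (A * x + B * frob x) - B * (frob A * frob x + frob B * (x + frob x))
        + 2 * (B * frob B * x)"
    by (simp add: algebra_simps)
  also have "\<dots> = 0"
    using lin lin_frob two_eq_0 by simp
  finally show "x \<in> {0}"
    using assms by simp
qed (simp add: Tr_eq)

lemma norm_eq_1_imp_frob_eigenvector:
  assumes norm: "r * frob r * frob (frob r) = 1"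
  shows "\<exists>x. x \<noteq> 0 \<and> frob x = r * x"
proof -
  have "r \<noteq> 0" and "frob r \<noteq> 0"
    using norm by auto
  define g where "g z = z + (1 / r) * frob z + frob (frob r) * frob (frob z)" for z
  have "card {z. g z = 0} \<le> q ^ 2"
  proof -
    have "q < q ^ 2"
      using q_ge_2 by (simp add: power2_eq_square)
    then show ?thesis
      using card_trinomial_roots_le[of "frob (frob r)" q "q ^ 2" 1 "1 / r"] norm q_ge_2 \<open>r \<noteq> 0\<close>
      by (simp add: g_def frob_def[symmetric] power_q_sq_eq)
  qed
  also have "\<dots> < card (UNIV :: 'a set)"
    using card_field q_ge_2 by (simp add: power_strict_increasing)
  finally have "{z. g z = 0} \<noteq> UNIV"
    by auto
  then obtain z where "g z \<noteq> 0"
    by auto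
  moreover have "frob (g z) = r * g z"
  proof -
    have "y / frob r = r * frob (frob r) * y" for y
      using norm \<open>frob r \<noteq> 0\<close> by (simp add: field_simps)
    then show ?thesis
      using \<open>r \<noteq> 0\<close> by (simp add: g_def frob_add frob_mult frob_divide algebra_simps)
  qed
  ultimately show ?thesis
    by blast
qed

lemma card_frob_eigenspace:
  assumes "x0 \<noteq> 0" and "frob x0 = r * x0"
  shows "card {x. frob x = r * x} = q"
proof -
  have "r \<noteq> 0"
    using assms by auto
  have "{x. frob x = r * x} = (*) x0 ` {k. frob k = k}"
  proof (intro equalityI subsetI)
    fix x assume "x \<in> {x. frob x = r * x}"
    then have "frob (x / x0) = x / x0"
      using assms \<open>r \<noteq> 0\<close> by (simp add: frob_divide)
    then show "x \<in> (*) x0 ` {k. frob k = k}"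
      using assms(1) by (intro image_eqI[of _ _ "x / x0"]) auto
  qed (use assms in \<open>auto simp: frob_mult\<close>)
  moreover have "inj_on ((*) x0) {k. frob k = k}"
    using assms(1) by (auto simp: inj_on_def)
  ultimately show ?thesis
    by (simp add: card_image card_frob_fixed)
qed

lemma norm_eq_1_if_mult_frob_eq_add_1:
  assumes "r * frob r = r + 1"
  shows "r * frob r * frob (frob r) = 1"
proof -
  have "frob r * frob (frob r) = frob r + 1"
    using arg_cong[OF assms, of frob] by (simp add: frob_add frob_mult)
  then have "r * frob r * frob (frob r) = r * frob r + r"
    by (simp add: mult.assoc distrib_left)
  also have "\<dots> = 1"
    using assms add_self_eq_0[of r] by (simp add: algebra_simps)
  finally show ?thesis .
qed

lemma ker_Tr_linear_eq_frob_eigenspace: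
  assumes r: "r * frob r = r + 1" and "B \<noteq> 0" and "A = r * B"
  shows "{x. Tr q x = 0 \<and> A * x + B * frob x = 0} = {x. frob x = r * x}"
proof (intro equalityI subsetI)
  fix x assume "x \<in> {x. Tr q x = 0 \<and> A * x + B * frob x = 0}"
  then show "x \<in> {x. frob x = r * x}"
    using assms(2,3) by (auto simp: add_eq_0_iff_eq algebra_simps)
next
  fix x assume "x \<in> {x. frob x = r * x}"
  then have "Tr q x = (r * frob r + r + 1) * x" and "A * x + B * frob x = (A + A) * x"
    using assms(3) by (simp_all add: Tr_eq frob_mult algebra_simps)
  then show "x \<in> {x. Tr q x = 0 \<and> A * x + B * frob x = 0}"
    using r by (simp add: add_self_eq_0 two_eq_0)
qed

lemma card_ker_Tr_linear_eq_q:
  assumes P: "A * frob A + A * frob B + B * frob B = 0" and "A \<noteq> 0 \<or> B \<noteq> 0"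
  shows "card {x. Tr q x = 0 \<and> A * x + B * frob x = 0} = q"
proof -
  have "B \<noteq> 0"
    using assms by auto
  define r where "r = A / B"
  have "r * frob r + (r + 1) = (A * frob A + A * frob B + B * frob B) / (B * frob B)"
    using \<open>B \<noteq> 0\<close> by (simp add: r_def frob_divide field_simps)
  then have r_eq: "r * frob r = r + 1"
    using P by (simp add: add_eq_0_iff_eq)
  then obtain x0 where "x0 \<noteq> 0" and "frob x0 = r * x0"
    using norm_eq_1_imp_frob_eigenvector norm_eq_1_if_mult_frob_eq_add_1 by blast
  moreover have "{x. Tr q x = 0 \<and> A * x + B * frob x = 0} = {x. frob x = r * x}"
    using r_eq \<open>B \<noteq> 0\<close> by (intro ker_Tr_linear_eq_frob_eigenspace) (simp_all add: r_def)
  ultimately show ?thesis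
    using card_frob_eigenspace by simp
qed

end


theorem mainTheorem4:
  fixes a b c :: "'a::{field,finite}" and m q :: nat
  assumes "m \<ge> 1" and "q = 2 ^ m" and "card (UNIV :: 'a set) = q ^ 3"
    and "L q a b c 1 = 0"
  shows "card {x. Tr q x = 0 \<and> Ladj q a b c x = 0} =
    (if Tr q (a ^ (q + 1) + a ^ q * b + b ^ (q + 1)) \<noteq> 0 then 1
     else if a + b ^ (q ^ 2) = 0 \<and> a + c ^ q = 0 then q ^ 2
     else q)"
proof -
  note field = assms(1-3)
  have c: "c = a + b"
    using assms(4) add_eq_0_iff_eq[OF field, of "a + b" c] by (simp add: L_def)
  define A B where "A = a + frob q (frob q b)" and "B = frob q (frob q b) + frob q c"
  have sols: "{x. Tr q x = 0 \<and> Ladj q a b c x = 0} = {x. Tr q x = 0 \<and> A * x + B * frob q x = 0}"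
    using Ladj_eq_on_ker_Tr[OF field] by (auto simp: A_def B_def)
  have coeffs: "(a + b ^ (q ^ 2) = 0 \<and> a + c ^ q = 0) \<longleftrightarrow> A = 0 \<and> B = 0"
  proof -
    have "a + b ^ (q ^ 2) = A"
      by (simp add: A_def power_q_sq_eq[OF field])
    moreover have "a + c ^ q = A + B"
      by (simp add: A_def B_def two_eq_0[OF field] frob_def[OF field])
    ultimately show ?thesis
      by auto
  qed
  show ?thesis
    unfolding sols coeffs Tr_quadratic_form_eq[OF field c A_def B_def]
    using ker_Tr_linear_eq_singleton[OF field, of A B] card_ker_Tr_linear_eq_q[OF field, of A B]
      card_ker_Tr[OF field]
    by auto
qed

end
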